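(* For every finite set of ground terms $\Gamma$ and ground term $M$, the judgment $\Gamma\vdash M$ is provable in the natural deduction system $\mathcal N$ under theory $E$ if and only if the sequent $\downarrow\Gamma\vdash\downarrow M$ is provable in the sequent system $\mathcal D$.
   Context: Fix names, variables and constructors $\mathsf{pub}$ (unary), $\mathsf{sign},\mathsf{blind},\langle\cdot,\cdot\rangle,\{\cdot\}_\cdot$ (binary). Let $E$ be the union of AC-convergent equational theories $E_1,\dots,E_n$ with pairwise disjoint signatures $\Sigma_{E_i}$, disjoint from the constructors, each containing at most one associative-commutative (AC) binary symbol $\oplus_i$; $E$ is presented by a rewrite system $R_E$ terminating and confluent modulo AC; $\Sigma_E=\bigcup_i\Sigma_{E_i}$. Terms: names, variables, $\mathsf{pub}(M)$, $\mathsf{sign}(M,N)$, $\mathsf{blind}(M,N)$, $\langle M,N\rangle$, $\{M\}_N$, $g(M_1,\dots,M_j)$, $g\in\Sigma_E$. $\equiv$: equality modulo AC of all $\oplus_i$; $\approx_E$: equality modulo $E$; $\downarrow M$: $R_E$-normal form modulo AC; $\downarrow\Gamma$ elementwise. Guarded term: name, variable, or headed by a constructor. $E_i$-context: term with holes built only from symbols of $\Sigma_{E_i}$. A subterm occurrence $N$ of $M$ is a cross-theory subterm if headed by a symbol of some $\Sigma_{E_i}$ and it is an immediate argument of a subterm of $M$ headed by a symbol of $\Sigma_{E_j}$, $j\ne i$. $\Gamma,M$ means $\Gamma\cup\{M\}$. System $\mathcal N$: ($id$) $\Gamma\vdash M$ if $M\in\Gamma$; ($e_E$) from $\Gamma\vdash\{M\}_K$,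 $\Gamma\vdash K$ infer $\Gamma\vdash M$; ($e_I$) from $\Gamma\vdash M$, $\Gamma\vdash K$ infer $\Gamma\vdash\{M\}_K$; ($p_E$) from $\Gamma\vdash\langle M,N\rangle$ infer $\Gamma\vdash M$ and also $\Gamma\vdash N$; ($p_I$) from $\Gamma\vdash M,\Gamma\vdash N$ infer $\Gamma\vdash\langle M,N\rangle$; ($\mathsf{sign}_E$) from $\Gamma\vdash\mathsf{sign}(M,K)$, $\Gamma\vdash\mathsf{pub}(K)$ infer $\Gamma\vdash M$; ($\mathsf{sign}_I$) from $\Gamma\vdash M,\Gamma\vdash K$ infer $\Gamma\vdash\mathsf{sign}(M,K)$; ($\mathsf{blind}_{E1}$) from $\Gamma\vdash\mathsf{blind}(M,K)$, $\Gamma\vdash K$ infer $\Gamma\vdash M$; ($\mathsf{blind}_I$) from $\Gamma\vdash M,\Gamma\vdash K$ infer $\Gamma\vdash\mathsf{blind}(M,K)$; ($\mathsf{blind}_{E2}$) from $\Gamma\vdash\mathsf{sign}(\mathsf{blind}(M,R),K)$, $\Gamma\vdash R$ infer $\Gamma\vdash\mathsf{sign}(M,K)$; ($g_I$, $g\in\Sigma_E$) from $\Gamma\vdash M_1,\dots,\Gamma\vdash M_j$ infer $\Gamma\vdash g(M_1,\dots,M_j)$; ($\approx$) from $\Gamma\vdash N$ infer $\Gamma\vdash M$ if $M\approx_E N$. System $\mathcal D$ (sequents with all terms in normal form): ($id_{E_i}$, each $i$) $\Gamma\vdash M$ with no premise if $M\approx_E C[M_1,\dots,M_k]$ for an $E_i$-context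 $C$ and $M_l\in\Gamma$; (cut) from $\Gamma\vdash M$, $\Gamma,M\vdash T$ infer $\Gamma\vdash T$; ($p_L$) from $\Gamma,\langle M,N\rangle,M,N\vdash T$ infer $\Gamma,\langle M,N\rangle\vdash T$; ($p_R$) from $\Gamma\vdash M,\Gamma\vdash N$ infer $\Gamma\vdash\langle M,N\rangle$; ($e_L$) from $\Gamma,\{M\}_K\vdash K$ and $\Gamma,\{M\}_K,M,K\vdash N$ infer $\Gamma,\{M\}_K\vdash N$; ($e_R$) from $\Gamma\vdash M,\Gamma\vdash K$ infer $\Gamma\vdash\{M\}_K$; ($\mathsf{sign}_L$) from $\Gamma,\mathsf{sign}(M,K),\mathsf{pub}(L),M\vdash N$ infer $\Gamma,\mathsf{sign}(M,K),\mathsf{pub}(L)\vdash N$ if $K\equiv L$; ($\mathsf{sign}_R$) from $\Gamma\vdash M,\Gamma\vdash K$ infer $\Gamma\vdash\mathsf{sign}(M,K)$; ($\mathsf{blind}_{L1}$) from $\Gamma,\mathsf{blind}(M,K)\vdash K$ and $\Gamma,\mathsf{blind}(M,K),M,K\vdash N$ infer $\Gamma,\mathsf{blind}(M,K)\vdash N$; ($\mathsf{blind}_R$) from $\Gamma\vdash M,\Gamma\vdash K$ infer $\Gamma\vdash\mathsf{blind}(M,K)$; ($\mathsf{blind}_{L2}$) from $\Gamma,\mathsf{sign}(\mathsf{blind}(M,R),K)\vdash R$ and $\Gamma,\mathsf{sign}(\mathsf{blind}(M,R),K),\mathsf{sign}(M,K),R\vdash N$ infer $\Gamma,\mathsf{sign}(\mathsf{blind}(M,R),K)\vdash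 N$; ($gs$) from $\Gamma\vdash A$, $\Gamma,A\vdash M$ infer $\Gamma\vdash M$ if $A$ is a guarded subterm of a term in $\Gamma\cup\{M\}$; ($cs$) from $\Gamma\vdash N$, $\Gamma,N\vdash M$ infer $\Gamma\vdash M$ if $N$ is a cross-theory subterm of a term in $\Gamma\cup\{M\}$. *)

theory Defs
  imports Main
begin

section \<open>Terms\<close>

text \<open>Names 'n, variables 'v, and the symbols 'f of the equational signature Sigma_E.
  The constructors pub, sign, blind, pairing and encryption are separate term formers.\<close>

datatype ('n, 'v, 'f) trm =
    Nm 'n
  | Var 'v
  | Pub "('n, 'v, 'f) trm"
  | Sign "('n, 'v, 'f) trm" "('n, 'v, 'f) trm"
  | Blind "('n, 'v, 'f) trm" "('n, 'v, 'f) trm"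
  | Pair "('n, 'v, 'f) trm" "('n, 'v, 'f) trm"
  | Enc "('n, 'v, 'f) trm" "('n, 'v, 'f) trm"  \<comment> \<open>Enc M K is {M}_K\<close>
  | Fn 'f "('n, 'v, 'f) trm list"

fun vars :: "('n, 'v, 'f) trm \<Rightarrow> 'v set" where
  "vars (Nm n) = {}"
| "vars (Var x) = {x}"
| "vars (Pub M) = vars M"
| "vars (Sign M N) = vars M \<union> vars N"
| "vars (Blind M N) = vars M \<union> vars N"
| "vars (Pair M N) = vars M \<union> vars N"
| "vars (Enc M N) = vars M \<union> vars N"
| "vars (Fn f ts) = (\<Union>t\<in>set ts. vars t)"

definition ground :: "('n, 'v, 'f) trm \<Rightarrow> bool" where
  "ground t \<longleftrightarrow> vars t = {}"

fun wft :: "('f \<Rightarrow> nat) \<Rightarrow> ('n, 'v, 'f) trm \<Rightarrow> bool" where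
  "wft ar (Nm n) = True"
| "wft ar (Var x) = True"
| "wft ar (Pub M) = wft ar M"
| "wft ar (Sign M N) = (wft ar M \<and> wft ar N)"
| "wft ar (Blind M N) = (wft ar M \<and> wft ar N)"
| "wft ar (Pair M N) = (wft ar M \<and> wft ar N)"
| "wft ar (Enc M N) = (wft ar M \<and> wft ar N)"
| "wft ar (Fn f ts) = (length ts = ar f \<and> (\<forall>t\<in>set ts. wft ar t))"

fun subst :: "('v \<Rightarrow> ('n, 'v, 'f) trm) \<Rightarrow> ('n, 'v, 'f) trm \<Rightarrow> ('n, 'v, 'f) trm" where
  "subst \<sigma> (Nm n) = Nm n"
| "subst \<sigma> (Var x) = \<sigma> x"
| "subst \<sigma> (Pub M) = Pub (subst \<sigma> M)"
| "subst \<sigma> (Sign M N) = Sign (subst \<sigma> M) (subst \<sigma> N)"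
| "subst \<sigma> (Blind M N) = Blind (subst \<sigma> M) (subst \<sigma> N)"
| "subst \<sigma> (Pair M N) = Pair (subst \<sigma> M) (subst \<sigma> N)"
| "subst \<sigma> (Enc M N) = Enc (subst \<sigma> M) (subst \<sigma> N)"
| "subst \<sigma> (Fn f ts) = Fn f (map (subst \<sigma>) ts)"

fun subterms :: "('n, 'v, 'f) trm \<Rightarrow> ('n, 'v, 'f) trm set" where
  "subterms (Nm n) = {Nm n}"
| "subterms (Var x) = {Var x}"
| "subterms (Pub M) = insert (Pub M) (subterms M)"
| "subterms (Sign M N) = insert (Sign M N) (subterms M \<union> subterms N)"
| "subterms (Blind M N) = insert (Blind M N) (subterms M \<union> subterms N)"
| "subterms (Pair M N) = insert (Pair M N) (subterms M \<union> subterms N)"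
| "subterms (Enc M N) = insert (Enc M N) (subterms M \<union> subterms N)"
| "subterms (Fn f ts) = insert (Fn f ts) (\<Union>t\<in>set ts. subterms t)"

fun guarded :: "('n, 'v, 'f) trm \<Rightarrow> bool" where
  "guarded (Fn f ts) = False"
| "guarded t = True"

definition guarded_subterms :: "('n, 'v, 'f) trm set \<Rightarrow> ('n, 'v, 'f) trm set" where
  "guarded_subterms S = {A. A \<in> (\<Union>t\<in>S. subterms t) \<and> guarded A}"

text \<open>Cross-theory subterms; th f is the index i of the theory E_i with f in Sigma_{E_i}
  (this encodes pairwise disjointness of the signatures).\<close>
definition cross_subterms :: "('f \<Rightarrow> 'i) \<Rightarrow> ('n, 'v, 'f) trm \<Rightarrow> ('n, 'v, 'f) trm set" where
  "cross_subterms th t = {N. \<exists>g ts h us. Fn g ts \<in> subterms t \<and> N \<in> set ts \<and>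
                              N = Fn h us \<and> th h \<noteq> th g}"

fun pure :: "('f \<Rightarrow> 'i) \<Rightarrow> 'i \<Rightarrow> ('n, 'v, 'f) trm \<Rightarrow> bool" where
  "pure th i (Var x) = True"
| "pure th i (Fn f ts) = (th f = i \<and> (\<forall>t\<in>set ts. pure th i t))"
| "pure th i t = False"

text \<open>Terms of the form C[M_1,...,M_k] with C an E_i-context and all M_l in Gamma.\<close>
inductive_set ectx :: "('f \<Rightarrow> 'i) \<Rightarrow> ('f \<Rightarrow> nat) \<Rightarrow> 'i \<Rightarrow> ('n, 'v, 'f) trm set
                        \<Rightarrow> ('n, 'v, 'f) trm set"
  for th ar i \<Gamma> where
  hole: "M \<in> \<Gamma> \<Longrightarrow> M \<in> ectx th ar i \<Gamma>"
| sym: "th f = i \<Longrightarrow> length ts = ar f \<Longrightarrow> (\<forall>t\<in>set ts. t \<in> ectx th ar i \<Gamma>)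
        \<Longrightarrow> Fn f ts \<in> ectx th ar i \<Gamma>"

section \<open>Rewriting modulo AC\<close>

inductive_set ctxcl :: "(('n, 'v, 'f) trm \<times> ('n, 'v, 'f) trm) set
                        \<Rightarrow> (('n, 'v, 'f) trm \<times> ('n, 'v, 'f) trm) set"
  for S where
  root: "(s, t) \<in> S \<Longrightarrow> (s, t) \<in> ctxcl S"
| pub: "(s, t) \<in> ctxcl S \<Longrightarrow> (Pub s, Pub t) \<in> ctxcl S"
| sign1: "(s, t) \<in> ctxcl S \<Longrightarrow> (Sign s u, Sign t u) \<in> ctxcl S"
| sign2: "(s, t) \<in> ctxcl S \<Longrightarrow> (Sign u s, Sign u t) \<in> ctxcl S"
| blind1: "(s, t) \<in> ctxcl S \<Longrightarrow> (Blind s u, Blind t u) \<in> ctxcl S"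
| blind2: "(s, t) \<in> ctxcl S \<Longrightarrow> (Blind u s, Blind u t) \<in> ctxcl S"
| pair1: "(s, t) \<in> ctxcl S \<Longrightarrow> (Pair s u, Pair t u) \<in> ctxcl S"
| pair2: "(s, t) \<in> ctxcl S \<Longrightarrow> (Pair u s, Pair u t) \<in> ctxcl S"
| enc1: "(s, t) \<in> ctxcl S \<Longrightarrow> (Enc s u, Enc t u) \<in> ctxcl S"
| enc2: "(s, t) \<in> ctxcl S \<Longrightarrow> (Enc u s, Enc u t) \<in> ctxcl S"
| fn: "(s, t) \<in> ctxcl S \<Longrightarrow> (Fn f (xs @ s # ys), Fn f (xs @ t # ys)) \<in> ctxcl S"

definition ac_root :: "'f set \<Rightarrow> (('n, 'v, 'f) trm \<times> ('n, 'v, 'f) trm) set" where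
  "ac_root ACs =
     {(Fn f [a, b], Fn f [b, a]) | f a b. f \<in> ACs} \<union>
     {(Fn f [Fn f [a, b], c], Fn f [a, Fn f [b, c]]) | f a b c. f \<in> ACs}"

definition acstep :: "'f set \<Rightarrow> (('n, 'v, 'f) trm \<times> ('n, 'v, 'f) trm) set" where
  "acstep ACs = ctxcl (ac_root ACs)"

definition acq :: "'f set \<Rightarrow> (('n, 'v, 'f) trm \<times> ('n, 'v, 'f) trm) set" where
  "acq ACs = (acstep ACs \<union> (acstep ACs)\<inverse>)\<^sup>*"

definition rstep :: "(('n, 'v, 'f) trm \<times> ('n, 'v, 'f) trm) set
                     \<Rightarrow> (('n, 'v, 'f) trm \<times> ('n, 'v, 'f) trm) set" where
  "rstep R = ctxcl {(subst \<sigma> l, subst \<sigma> r) | \<sigma> l r. (l, r) \<in> R}"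

definition racstep :: "'f set \<Rightarrow> (('n, 'v, 'f) trm \<times> ('n, 'v, 'f) trm) set
                       \<Rightarrow> (('n, 'v, 'f) trm \<times> ('n, 'v, 'f) trm) set" where
  "racstep ACs R = acq ACs O rstep R O acq ACs"

text \<open>Equality modulo E (E presented by R together with AC).\<close>
definition eqE :: "'f set \<Rightarrow> (('n, 'v, 'f) trm \<times> ('n, 'v, 'f) trm) set
                   \<Rightarrow> (('n, 'v, 'f) trm \<times> ('n, 'v, 'f) trm) set" where
  "eqE ACs R = (rstep R \<union> acstep ACs \<union> (rstep R \<union> acstep ACs)\<inverse>)\<^sup>*"

definition irred :: "'f set \<Rightarrow> (('n, 'v, 'f) trm \<times> ('n, 'v, 'f) trm) set
                     \<Rightarrow> ('n, 'v, 'f) trm \<Rightarrow> bool" where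
  "irred ACs R t \<longleftrightarrow> (\<nexists>u. (t, u) \<in> racstep ACs R)"

text \<open>A chosen R-normal form modulo AC (unique up to AC under convergence).\<close>
definition nf :: "'f set \<Rightarrow> (('n, 'v, 'f) trm \<times> ('n, 'v, 'f) trm) set
                  \<Rightarrow> ('n, 'v, 'f) trm \<Rightarrow> ('n, 'v, 'f) trm" where
  "nf ACs R t = (SOME u. (t, u) \<in> (racstep ACs R)\<^sup>* \<and> irred ACs R u)"

definition convergent_modAC :: "'f set \<Rightarrow> (('n, 'v, 'f) trm \<times> ('n, 'v, 'f) trm) set \<Rightarrow> bool" where
  "convergent_modAC ACs R \<longleftrightarrow>
     wf ((racstep ACs R)\<inverse>) \<and>
     (\<forall>s t1 t2. (s, t1) \<in> (racstep ACs R)\<^sup>* \<and> (s, t2) \<in> (racstep ACs R)\<^sup>* \<longrightarrow>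
        (\<exists>u1 u2. (t1, u1) \<in> (racstep ACs R)\<^sup>* \<and> (t2, u2) \<in> (racstep ACs R)\<^sup>* \<and>
                 (u1, u2) \<in> acq ACs))"

text \<open>Standing assumptions: E is the union of finitely many theories E_i (symbols f belong to
  theory th f), each with at most one AC symbol (binary), presented by rules R, each rule built
  from the symbols of a single E_i; each E_i and the union are convergent modulo AC.\<close>
definition rules_of :: "('f \<Rightarrow> 'i) \<Rightarrow> 'i \<Rightarrow> (('n, 'v, 'f) trm \<times> ('n, 'v, 'f) trm) set
                        \<Rightarrow> (('n, 'v, 'f) trm \<times> ('n, 'v, 'f) trm) set" where
  "rules_of th i R = {(l, r) \<in> R. pure th i l \<and> pure th i r}"

definition E_setting :: "('f \<Rightarrow> 'i) \<Rightarrow> ('f \<Rightarrow> nat) \<Rightarrow> 'f set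
                         \<Rightarrow> (('n, 'v, 'f) trm \<times> ('n, 'v, 'f) trm) set \<Rightarrow> bool" where
  "E_setting th ar ACs R \<longleftrightarrow>
     finite (range th) \<and>
     (\<forall>f\<in>ACs. ar f = 2) \<and>
     (\<forall>f\<in>ACs. \<forall>g\<in>ACs. th f = th g \<longrightarrow> f = g) \<and>
     (\<forall>(l, r)\<in>R. (\<exists>i. pure th i l \<and> pure th i r) \<and> wft ar l \<and> wft ar r \<and>
                  (\<forall>x. l \<noteq> Var x) \<and> vars r \<subseteq> vars l) \<and>
     (\<forall>i. convergent_modAC (ACs \<inter> th -` {i}) (rules_of th i R)) \<and>
     convergent_modAC ACs R"

section \<open>Natural deduction system N\<close>

inductive nd :: "('f \<Rightarrow> nat) \<Rightarrow> 'f set \<Rightarrow> (('n, 'v, 'f) trm \<times> ('n, 'v, 'f) trm) set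
                 \<Rightarrow> ('n, 'v, 'f) trm set \<Rightarrow> ('n, 'v, 'f) trm \<Rightarrow> bool"
  for ar ACs R \<Gamma> where
  id: "M \<in> \<Gamma> \<Longrightarrow> nd ar ACs R \<Gamma> M"
| eE: "nd ar ACs R \<Gamma> (Enc M K) \<Longrightarrow> nd ar ACs R \<Gamma> K \<Longrightarrow> nd ar ACs R \<Gamma> M"
| eI: "nd ar ACs R \<Gamma> M \<Longrightarrow> nd ar ACs R \<Gamma> K \<Longrightarrow> nd ar ACs R \<Gamma> (Enc M K)"
| pE1: "nd ar ACs R \<Gamma> (Pair M N) \<Longrightarrow> nd ar ACs R \<Gamma> M"
| pE2: "nd ar ACs R \<Gamma> (Pair M N) \<Longrightarrow> nd ar ACs R \<Gamma> N"
| pI: "nd ar ACs R \<Gamma> M \<Longrightarrow> nd ar ACs R \<Gamma> N \<Longrightarrow> nd ar ACs R \<Gamma> (Pair M N)"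
| signE: "nd ar ACs R \<Gamma> (Sign M K) \<Longrightarrow> nd ar ACs R \<Gamma> (Pub K) \<Longrightarrow> nd ar ACs R \<Gamma> M"
| signI: "nd ar ACs R \<Gamma> M \<Longrightarrow> nd ar ACs R \<Gamma> K \<Longrightarrow> nd ar ACs R \<Gamma> (Sign M K)"
| blindE1: "nd ar ACs R \<Gamma> (Blind M K) \<Longrightarrow> nd ar ACs R \<Gamma> K \<Longrightarrow> nd ar ACs R \<Gamma> M"
| blindI: "nd ar ACs R \<Gamma> M \<Longrightarrow> nd ar ACs R \<Gamma> K \<Longrightarrow> nd ar ACs R \<Gamma> (Blind M K)"
| blindE2: "nd ar ACs R \<Gamma> (Sign (Blind M Rr) K) \<Longrightarrow> nd ar ACs R \<Gamma> Rr
            \<Longrightarrow> nd ar ACs R \<Gamma> (Sign M K)"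
| gI: "length Ms = ar g \<Longrightarrow> (\<forall>M\<in>set Ms. nd ar ACs R \<Gamma> M) \<Longrightarrow> nd ar ACs R \<Gamma> (Fn g Ms)"
| eq: "nd ar ACs R \<Gamma> N \<Longrightarrow> (M, N) \<in> eqE ACs R \<Longrightarrow> nd ar ACs R \<Gamma> M"

section \<open>Sequent system D\<close>

definition nseq :: "'f set \<Rightarrow> (('n, 'v, 'f) trm \<times> ('n, 'v, 'f) trm) set
                    \<Rightarrow> ('n, 'v, 'f) trm set \<Rightarrow> ('n, 'v, 'f) trm \<Rightarrow> bool" where
  "nseq ACs R \<Gamma> M \<longleftrightarrow> (\<forall>t\<in>insert M \<Gamma>. irred ACs R t)"

inductive sd :: "('f \<Rightarrow> 'i) \<Rightarrow> ('f \<Rightarrow> nat) \<Rightarrow> 'f set \<Rightarrow> (('n, 'v, 'f) trm \<times> ('n, 'v, 'f) trm) set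
                 \<Rightarrow> ('n, 'v, 'f) trm set \<Rightarrow> ('n, 'v, 'f) trm \<Rightarrow> bool"
  for th ar ACs R where
  idE: "nseq ACs R \<Gamma> M \<Longrightarrow> (M, C) \<in> eqE ACs R \<Longrightarrow> C \<in> ectx th ar i \<Gamma>
        \<Longrightarrow> sd th ar ACs R \<Gamma> M"
| cut: "nseq ACs R \<Gamma> T \<Longrightarrow> sd th ar ACs R \<Gamma> M \<Longrightarrow> sd th ar ACs R (insert M \<Gamma>) T
        \<Longrightarrow> sd th ar ACs R \<Gamma> T"
| pL: "nseq ACs R \<Gamma> T \<Longrightarrow> Pair M N \<in> \<Gamma> \<Longrightarrow> sd th ar ACs R (\<Gamma> \<union> {M, N}) T
       \<Longrightarrow> sd th ar ACs R \<Gamma> T"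
| pR: "nseq ACs R \<Gamma> (Pair M N) \<Longrightarrow> sd th ar ACs R \<Gamma> M \<Longrightarrow> sd th ar ACs R \<Gamma> N
       \<Longrightarrow> sd th ar ACs R \<Gamma> (Pair M N)"
| eL: "nseq ACs R \<Gamma> N \<Longrightarrow> Enc M K \<in> \<Gamma> \<Longrightarrow> sd th ar ACs R \<Gamma> K
       \<Longrightarrow> sd th ar ACs R (\<Gamma> \<union> {M, K}) N \<Longrightarrow> sd th ar ACs R \<Gamma> N"
| eR: "nseq ACs R \<Gamma> (Enc M K) \<Longrightarrow> sd th ar ACs R \<Gamma> M \<Longrightarrow> sd th ar ACs R \<Gamma> K
       \<Longrightarrow> sd th ar ACs R \<Gamma> (Enc M K)"
| signL: "nseq ACs R \<Gamma> N \<Longrightarrow> Sign M K \<in> \<Gamma> \<Longrightarrow> Pub L \<in> \<Gamma> \<Longrightarrow> (K, L) \<in> acq ACs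
          \<Longrightarrow> sd th ar ACs R (insert M \<Gamma>) N \<Longrightarrow> sd th ar ACs R \<Gamma> N"
| signR: "nseq ACs R \<Gamma> (Sign M K) \<Longrightarrow> sd th ar ACs R \<Gamma> M \<Longrightarrow> sd th ar ACs R \<Gamma> K
          \<Longrightarrow> sd th ar ACs R \<Gamma> (Sign M K)"
| blindL1: "nseq ACs R \<Gamma> N \<Longrightarrow> Blind M K \<in> \<Gamma> \<Longrightarrow> sd th ar ACs R \<Gamma> K
            \<Longrightarrow> sd th ar ACs R (\<Gamma> \<union> {M, K}) N \<Longrightarrow> sd th ar ACs R \<Gamma> N"
| blindR: "nseq ACs R \<Gamma> (Blind M K) \<Longrightarrow> sd th ar ACs R \<Gamma> M \<Longrightarrow> sd th ar ACs R \<Gamma> K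
           \<Longrightarrow> sd th ar ACs R \<Gamma> (Blind M K)"
| blindL2: "nseq ACs R \<Gamma> N \<Longrightarrow> Sign (Blind M Rr) K \<in> \<Gamma> \<Longrightarrow> sd th ar ACs R \<Gamma> Rr
            \<Longrightarrow> sd th ar ACs R (\<Gamma> \<union> {Sign M K, Rr}) N \<Longrightarrow> sd th ar ACs R \<Gamma> N"
| gs: "nseq ACs R \<Gamma> M \<Longrightarrow> A \<in> guarded_subterms (insert M \<Gamma>) \<Longrightarrow> sd th ar ACs R \<Gamma> A
       \<Longrightarrow> sd th ar ACs R (insert A \<Gamma>) M \<Longrightarrow> sd th ar ACs R \<Gamma> M"
| cs: "nseq ACs R \<Gamma> M \<Longrightarrow> N \<in> (\<Union>t\<in>insert M \<Gamma>. cross_subterms th t) \<Longrightarrow> sd th ar ACs R \<Gamma> N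
       \<Longrightarrow> sd th ar ACs R (insert N \<Gamma>) M \<Longrightarrow> sd th ar ACs R \<Gamma> M"

end

theory Submission
  imports Defs
begin

text \<open>Soundness: every rule of D is derivable in N (left rules are N-eliminations, id_E is
  obtained by g_I followed by an E-equality step), so a D-proof of a sequent whose hypotheses
  are N-derivable yields an N-derivation.

  Completeness: by induction on the N-derivation one shows that the normal form of the
  conclusion is D-derivable from the normalised hypotheses. The key fact is that a constructor
  applied to normal forms is again a normal form: every rewrite rule has a left-hand side headed
  by a symbol of Sigma_E and AC only permutes arguments of such symbols, so no rewrite step can
  take place at a constructor. Each N-rule then becomes the corresponding D-rule applied to
  normal forms, combined with cut; g_I and the equality rule are absorbed by id_E.\<close>


section \<open>Equality modulo E\<close>

lemma rtrancl_map:
  assumes "(x, y) \<in> r\<^sup>*" and "\<And>u v. (u, v) \<in> r \<Longrightarrow> (f u, f v) \<in> r"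
  shows "(f x, f y) \<in> r\<^sup>*"
  using assms(1) by induction (auto intro: rtrancl_into_rtrancl assms(2))

lemma eqE_refl [simp]: "(t, t) \<in> eqE ACs R"
  by (simp add: eqE_def)

lemma eqE_sym: "(s, t) \<in> eqE ACs R \<Longrightarrow> (t, s) \<in> eqE ACs R"
proof -
  have "(rstep R \<union> acstep ACs \<union> (rstep R \<union> acstep ACs)\<inverse>)\<inverse> =
      rstep R \<union> acstep ACs \<union> (rstep R \<union> acstep ACs)\<inverse>"
    by auto
  then show "(s, t) \<in> eqE ACs R \<Longrightarrow> (t, s) \<in> eqE ACs R"
    unfolding eqE_def by (metis rtrancl_converseI)
qed

lemma eqE_trans [trans]:
  "(s, t) \<in> eqE ACs R \<Longrightarrow> (t, u) \<in> eqE ACs R \<Longrightarrow> (s, u) \<in> eqE ACs R"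
  unfolding eqE_def by (rule rtrancl_trans)

lemma acq_imp_eqE: "(s, t) \<in> acq ACs \<Longrightarrow> (s, t) \<in> eqE ACs R"
  unfolding acq_def eqE_def by (rule rtrancl_mono[THEN subsetD, rotated]) blast+

lemma rstep_imp_eqE: "(s, t) \<in> rstep R \<Longrightarrow> (s, t) \<in> eqE ACs R"
  unfolding eqE_def by blast

lemma racstep_rtrancl_imp_eqE: "(s, t) \<in> (racstep ACs R)\<^sup>* \<Longrightarrow> (s, t) \<in> eqE ACs R"
proof (induction rule: rtrancl_induct)
  case (step t u)
  then have "(t, u) \<in> acq ACs O rstep R O acq ACs"
    unfolding racstep_def by blast
  then have "(t, u) \<in> eqE ACs R"
    by (blast intro: eqE_trans acq_imp_eqE rstep_imp_eqE)
  with step.IH show ?case by (rule eqE_trans)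
qed simp

lemma eqE_map_ctxcl:
  assumes "(s, t) \<in> eqE ACs R"
    and "\<And>S s t. (s, t) \<in> ctxcl S \<Longrightarrow> (c s, c t) \<in> ctxcl S"
  shows "(c s, c t) \<in> eqE ACs R"
  using assms(1) unfolding eqE_def
  by (rule rtrancl_map) (use assms(2) in \<open>auto simp: rstep_def acstep_def\<close>)

lemma racstep_map_ctxcl:
  assumes "(s, t) \<in> racstep ACs R"
    and "\<And>S s t. (s, t) \<in> ctxcl S \<Longrightarrow> (c s, c t) \<in> ctxcl S"
  shows "(c s, c t) \<in> racstep ACs R"
proof -
  have acq: "(c x, c y) \<in> acq ACs" if "(x, y) \<in> acq ACs" for x y
    using that unfolding acq_def
    by (rule rtrancl_map) (use assms(2) in \<open>auto simp: acstep_def\<close>)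
  from assms(1) obtain x y where "(s, x) \<in> acq ACs" "(x, y) \<in> rstep R" "(y, t) \<in> acq ACs"
    unfolding racstep_def by blast
  with acq assms(2) show ?thesis
    unfolding racstep_def rstep_def by blast
qed

definition binary_ctors :: "(('n, 'v, 'f) trm \<Rightarrow> ('n, 'v, 'f) trm \<Rightarrow> ('n, 'v, 'f) trm) set" where
  "binary_ctors = {Sign, Blind, Pair, Enc}"

lemma binary_ctorsI [simp]: "Sign \<in> binary_ctors" "Blind \<in> binary_ctors" "Pair \<in> binary_ctors"
  "Enc \<in> binary_ctors"
  by (simp_all add: binary_ctors_def)

lemma ctxcl_binary_ctor:
  assumes "c \<in> binary_ctors" and "(s, t) \<in> ctxcl S"
  shows "(c s u, c t u) \<in> ctxcl S" and "(c u s, c u t) \<in> ctxcl S"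
  using assms by (auto simp: binary_ctors_def intro: ctxcl.intros)

lemma eqE_Pub: "(a, a') \<in> eqE ACs R \<Longrightarrow> (Pub a, Pub a') \<in> eqE ACs R"
  by (rule eqE_map_ctxcl) (auto intro: ctxcl.pub)

lemma eqE_binary_ctor:
  assumes "c \<in> binary_ctors" and "(a, a') \<in> eqE ACs R" and "(b, b') \<in> eqE ACs R"
  shows "(c a b, c a' b') \<in> eqE ACs R"
proof -
  have "(c a b, c a' b) \<in> eqE ACs R"
    using assms(2)
    by (rule eqE_map_ctxcl[where c = "\<lambda>x. c x b"]) (rule ctxcl_binary_ctor[OF assms(1)])
  also have "(c a' b, c a' b') \<in> eqE ACs R"
    using assms(3)
    by (rule eqE_map_ctxcl[where c = "c a'"]) (rule ctxcl_binary_ctor[OF assms(1)])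
  finally show ?thesis .
qed

lemma eqE_Fn_args:
  "list_all2 (\<lambda>a b. (a, b) \<in> eqE ACs R) as bs \<Longrightarrow> (Fn g (xs @ as), Fn g (xs @ bs)) \<in> eqE ACs R"
proof (induction as bs arbitrary: xs rule: list_all2_induct)
  case (Cons a as b bs)
  have "(Fn g (xs @ a # as), Fn g (xs @ b # as)) \<in> eqE ACs R"
    using Cons.hyps(1)
    by (rule eqE_map_ctxcl[where c = "\<lambda>x. Fn g (xs @ x # as)"]) (rule ctxcl.fn)
  also have "(Fn g (xs @ b # as), Fn g (xs @ b # bs)) \<in> eqE ACs R"
    using Cons.IH[of "xs @ [b]"] by simp
  finally show ?case .
qed simp

lemma eqE_Fn_map:
  "(\<And>t. t \<in> set ts \<Longrightarrow> (t, f t) \<in> eqE ACs R) \<Longrightarrow> (Fn g ts, Fn g (map f ts)) \<in> eqE ACs R"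
  using eqE_Fn_args[of ACs R ts "map f ts" g "[]"] by (simp add: list_all2_conv_all_nth)

lemma irred_binary_ctor_args:
  assumes "c \<in> binary_ctors" and "irred ACs R (c a b)"
  shows "irred ACs R a" and "irred ACs R b"
  using assms(2) racstep_map_ctxcl[where c = "\<lambda>x. c x b"] racstep_map_ctxcl[where c = "c a"]
    ctxcl_binary_ctor[OF assms(1)]
  unfolding irred_def by blast+

section \<open>Normal forms\<close>

lemma convergent_modAC_has_nf:
  assumes "convergent_modAC ACs R"
  shows "\<exists>u. (t, u) \<in> (racstep ACs R)\<^sup>* \<and> irred ACs R u"
proof -
  have "wf ((racstep ACs R)\<inverse>)"
    using assms by (simp add: convergent_modAC_def)
  then show ?thesis
  proof (induction t rule: wf_induct_rule)
    case (less t)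
    show ?case
    proof (cases "irred ACs R t")
      case False
      then obtain t' where "(t, t') \<in> racstep ACs R"
        by (auto simp: irred_def)
      with less.IH show ?thesis
        by (meson converse_rtrancl_into_rtrancl converse_iff)
    qed blast
  qed
qed

context
  fixes ACs :: "'f set" and R :: "(('n, 'v, 'f) trm \<times> ('n, 'v, 'f) trm) set"
  assumes convergent: "convergent_modAC ACs R"
begin

lemma nf_reduct: "(t, nf ACs R t) \<in> (racstep ACs R)\<^sup>*"
  and irred_nf: "irred ACs R (nf ACs R t)"
  using someI_ex[OF convergent_modAC_has_nf[OF convergent, of t]] by (simp_all add: nf_def)

lemma nf_eqE: "(t, nf ACs R t) \<in> eqE ACs R"
  using nf_reduct by (rule racstep_rtrancl_imp_eqE)

end

section \<open>Structural properties of the sequent system\<close>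

lemma sd_nseq: "sd th ar ACs R \<Gamma> T \<Longrightarrow> nseq ACs R \<Gamma> T"
  by (induction rule: sd.induct) auto

lemma ectx_mono: "C \<in> ectx th ar i \<Gamma> \<Longrightarrow> \<Gamma> \<subseteq> \<Delta> \<Longrightarrow> C \<in> ectx th ar i \<Delta>"
  by (induction rule: ectx.induct) (auto intro: ectx.intros)

lemma sd_weaken:
  "sd th ar ACs R \<Gamma> T \<Longrightarrow> \<Gamma> \<subseteq> \<Delta> \<Longrightarrow> \<forall>t\<in>\<Delta>. irred ACs R t \<Longrightarrow> sd th ar ACs R \<Delta> T"
proof (induction arbitrary: \<Delta> rule: sd.induct)
  case (idE \<Gamma> M C i)
  then show ?case
    by (auto simp: nseq_def intro: sd.idE ectx_mono)
next
  case (cut \<Gamma> T M)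
  show ?case
    by (rule sd.cut[OF _ cut.IH])
      (use cut.hyps cut.prems in \<open>auto simp: nseq_def dest: sd_nseq\<close>)
next
  case (pL \<Gamma> T M N)
  show ?case
    by (rule sd.pL[OF _ _ pL.IH])
      (use pL.hyps pL.prems in \<open>auto simp: nseq_def dest: sd_nseq\<close>)
next
  case (pR \<Gamma> M N)
  show ?case
    by (rule sd.pR[OF _ pR.IH]) (use pR.hyps pR.prems in \<open>auto simp: nseq_def\<close>)
next
  case (eL \<Gamma> N M K)
  show ?case
    by (rule sd.eL[OF _ _ eL.IH])
      (use eL.hyps eL.prems in \<open>auto simp: nseq_def dest: sd_nseq\<close>)
next
  case (eR \<Gamma> M K)
  show ?case
    by (rule sd.eR[OF _ eR.IH]) (use eR.hyps eR.prems in \<open>auto simp: nseq_def\<close>)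
next
  case (signL \<Gamma> N M K L)
  show ?case
    by (rule sd.signL[OF _ _ _ _ signL.IH])
      (use signL.hyps signL.prems in \<open>auto simp: nseq_def dest: sd_nseq\<close>)
next
  case (signR \<Gamma> M K)
  show ?case
    by (rule sd.signR[OF _ signR.IH]) (use signR.hyps signR.prems in \<open>auto simp: nseq_def\<close>)
next
  case (blindL1 \<Gamma> N M K)
  show ?case
    by (rule sd.blindL1[OF _ _ blindL1.IH])
      (use blindL1.hyps blindL1.prems in \<open>auto simp: nseq_def dest: sd_nseq\<close>)
next
  case (blindR \<Gamma> M K)
  show ?case
    by (rule sd.blindR[OF _ blindR.IH]) (use blindR.hyps blindR.prems in \<open>auto simp: nseq_def\<close>)
next
  case (blindL2 \<Gamma> N M Rr K)
  show ?case
    by (rule sd.blindL2[OF _ _ blindL2.IH])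
      (use blindL2.hyps blindL2.prems in \<open>auto simp: nseq_def dest: sd_nseq\<close>)
next
  case (gs \<Gamma> M A)
  show ?case
    by (rule sd.gs[OF _ _ gs.IH])
      (use gs.hyps gs.prems in \<open>auto simp: nseq_def guarded_subterms_def dest: sd_nseq\<close>)
next
  case (cs \<Gamma> M N)
  show ?case
    by (rule sd.cs[OF _ _ cs.IH])
      (use cs.hyps cs.prems in \<open>auto simp: nseq_def dest: sd_nseq\<close>)
qed

lemma sd_cut':
  "sd th ar ACs R \<Gamma> A \<Longrightarrow> sd th ar ACs R (insert A \<Gamma>) T \<Longrightarrow> sd th ar ACs R \<Gamma> T"
  by (rule sd.cut) (auto simp: nseq_def dest: sd_nseq)

lemma sd_hyp: "M \<in> \<Gamma> \<Longrightarrow> nseq ACs R \<Gamma> M \<Longrightarrow> sd th ar ACs R \<Gamma> M"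
  by (rule sd.idE[where C = M]) (auto intro: ectx.hole)

lemma sd_eqE:
  assumes "sd th ar ACs R \<Gamma> A" and "(B, A) \<in> eqE ACs R" and "irred ACs R B"
  shows "sd th ar ACs R \<Gamma> B"
proof (rule sd_cut'[OF assms(1)])
  show "sd th ar ACs R (insert A \<Gamma>) B"
    using sd_nseq[OF assms(1)] assms(2,3)
    by (intro sd.idE[where C = A]) (auto simp: nseq_def intro: ectx.hole)
qed

lemma sd_cut_finite:
  assumes "finite \<Delta>" and "\<forall>A\<in>\<Delta>. sd th ar ACs R \<Gamma> A" and "sd th ar ACs R (\<Gamma> \<union> \<Delta>) T"
  shows "sd th ar ACs R \<Gamma> T"
  using assms
proof (induction arbitrary: \<Gamma> rule: finite_induct)
  case (insert A \<Delta>)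
  have "\<forall>B\<in>\<Delta>. sd th ar ACs R (insert A \<Gamma>) B"
    using insert.prems(1) sd_nseq[of th ar ACs R \<Gamma> A]
    by (auto simp: nseq_def intro: sd_weaken)
  with insert.prems insert.IH[of "insert A \<Gamma>"] show ?case
    by (auto intro: sd_cut')
qed simp

lemma sd_Fn_intro:
  assumes "(B, Fn g ts) \<in> eqE ACs R" and "irred ACs R B" and "\<forall>t\<in>\<Gamma>. irred ACs R t"
    and "length ts = ar g" and "\<forall>t\<in>set ts. sd th ar ACs R \<Gamma> t"
  shows "sd th ar ACs R \<Gamma> B"
proof (rule sd_cut_finite[OF finite_set assms(5)])
  have "Fn g ts \<in> ectx th ar (th g) (\<Gamma> \<union> set ts)"
    using assms(4) by (auto intro: ectx.intros)
  moreover have "\<forall>t\<in>\<Gamma> \<union> set ts. irred ACs R t"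
    using assms(3,5) sd_nseq[of th ar ACs R \<Gamma>] by (auto simp: nseq_def)
  ultimately show "sd th ar ACs R (\<Gamma> \<union> set ts) B"
    using assms(1,2) by (intro sd.idE) (auto simp: nseq_def)
qed

lemma sd_Pair_elim:
  assumes "sd th ar ACs R \<Gamma> (Pair M N)"
  shows "sd th ar ACs R \<Gamma> M" and "sd th ar ACs R \<Gamma> N"
proof -
  have irred: "\<forall>t\<in>insert (Pair M N) \<Gamma> \<union> {M, N}. irred ACs R t"
    using sd_nseq[OF assms] irred_binary_ctor_args[of Pair ACs R M N] by (auto simp: nseq_def)
  have "sd th ar ACs R \<Gamma> T" if "T \<in> {M, N}" for T
  proof (rule sd_cut'[OF assms])
    show "sd th ar ACs R (insert (Pair M N) \<Gamma>) T"
      by (rule sd.pL[where M = M and N = N])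
        (use irred that in \<open>auto intro!: sd_hyp simp: nseq_def\<close>)
  qed
  then show "sd th ar ACs R \<Gamma> M" and "sd th ar ACs R \<Gamma> N"
    by simp_all
qed

lemma sd_Enc_elim:
  assumes "sd th ar ACs R \<Gamma> (Enc M K)" and "sd th ar ACs R \<Gamma> K"
  shows "sd th ar ACs R \<Gamma> M"
proof (rule sd_cut'[OF assms(1)])
  have irred: "\<forall>t\<in>insert (Enc M K) \<Gamma> \<union> {M, K}. irred ACs R t"
    using sd_nseq[OF assms(1)] irred_binary_ctor_args[of Enc ACs R M K] by (auto simp: nseq_def)
  show "sd th ar ACs R (insert (Enc M K) \<Gamma>) M"
  proof (rule sd.eL[where M = M and K = K])
    show "sd th ar ACs R (insert (Enc M K) \<Gamma>) K"
      using irred by (auto intro: sd_weaken[OF assms(2)])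
  qed (use irred in \<open>auto intro!: sd_hyp simp: nseq_def\<close>)
qed

lemma sd_Blind_elim:
  assumes "sd th ar ACs R \<Gamma> (Blind M K)" and "sd th ar ACs R \<Gamma> K"
  shows "sd th ar ACs R \<Gamma> M"
proof (rule sd_cut'[OF assms(1)])
  have irred: "\<forall>t\<in>insert (Blind M K) \<Gamma> \<union> {M, K}. irred ACs R t"
    using sd_nseq[OF assms(1)] irred_binary_ctor_args[of Blind ACs R M K] by (auto simp: nseq_def)
  show "sd th ar ACs R (insert (Blind M K) \<Gamma>) M"
  proof (rule sd.blindL1[where M = M and K = K])
    show "sd th ar ACs R (insert (Blind M K) \<Gamma>) K"
      using irred by (auto intro: sd_weaken[OF assms(2)])
  qed (use irred in \<open>auto intro!: sd_hyp simp: nseq_def\<close>)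
qed

lemma sd_Sign_elim:
  assumes "sd th ar ACs R \<Gamma> (Sign M K)" and "sd th ar ACs R \<Gamma> (Pub K)"
  shows "sd th ar ACs R \<Gamma> M"
proof (rule sd_cut'[OF assms(1)], rule sd_cut')
  have irred: "\<forall>t\<in>insert (Pub K) (insert (Sign M K) \<Gamma>) \<union> {M}. irred ACs R t"
    using sd_nseq[OF assms(1)] sd_nseq[OF assms(2)] irred_binary_ctor_args[of Sign ACs R M K]
    by (auto simp: nseq_def)
  show "sd th ar ACs R (insert (Sign M K) \<Gamma>) (Pub K)"
    using irred by (auto intro: sd_weaken[OF assms(2)])
  show "sd th ar ACs R (insert (Pub K) (insert (Sign M K) \<Gamma>)) M"
    by (rule sd.signL[where M = M and K = K and L = K])
      (use irred in \<open>auto intro!: sd_hyp simp: nseq_def acq_def\<close>)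
qed

section \<open>Soundness\<close>

lemma nd_ectx: "C \<in> ectx th ar i \<Delta> \<Longrightarrow> \<forall>t\<in>\<Delta>. nd ar ACs R \<Gamma> t \<Longrightarrow> nd ar ACs R \<Gamma> C"
  by (induction rule: ectx.induct) (auto intro: nd.intros)

theorem sd_sound: "sd th ar ACs R \<Delta> T \<Longrightarrow> \<forall>t\<in>\<Delta>. nd ar ACs R \<Gamma> t \<Longrightarrow> nd ar ACs R \<Gamma> T"
proof (induction rule: sd.induct)
  case (idE \<Delta> M C i)
  then show ?case by (blast intro: nd.eq nd_ectx)
next
  case (signL \<Delta> N M K L)
  then have "nd ar ACs R \<Gamma> (Pub K)"
    by (blast intro: nd.eq eqE_Pub acq_imp_eqE)
  with signL show ?case by (auto intro: nd.signE)
qed (auto intro: nd.intros)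

section \<open>Normal forms of constructor terms\<close>

lemma ctxcl_converseI: "(s, t) \<in> ctxcl S \<Longrightarrow> (t, s) \<in> ctxcl (S\<inverse>)"
  by (induction rule: ctxcl.induct) (auto intro: ctxcl.intros)

lemma ctxcl_converse: "(ctxcl S)\<inverse> = ctxcl (S\<inverse>)"
  using ctxcl_converseI[of _ _ S] ctxcl_converseI[of _ _ "S\<inverse>"] by auto

lemma ctxcl_mono:
  assumes "S \<subseteq> T"
  shows "ctxcl S \<subseteq> ctxcl T"
proof (rule subrelI)
  fix s t assume "(s, t) \<in> ctxcl S"
  then show "(s, t) \<in> ctxcl T"
    by induction (use assms in \<open>auto intro: ctxcl.intros\<close>)
qed

lemma ctxcl_Un: "ctxcl (S \<union> T) = ctxcl S \<union> ctxcl T"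
proof
  show "ctxcl (S \<union> T) \<subseteq> ctxcl S \<union> ctxcl T"
  proof (rule subrelI)
    fix s t assume "(s, t) \<in> ctxcl (S \<union> T)"
    then show "(s, t) \<in> ctxcl S \<union> ctxcl T"
      by induction (auto intro: ctxcl.intros)
  qed
qed (simp add: ctxcl_mono)

lemma acq_eq_rtrancl_ctxcl: "acq ACs = (ctxcl (ac_root ACs \<union> (ac_root ACs)\<inverse>))\<^sup>*"
  by (simp add: acq_def acstep_def ctxcl_Un ctxcl_converse)

text \<open>The hypothesis \<not> guarded l says that l is headed by a symbol of Sigma_E.\<close>

lemma ctxcl_binary_ctor_cases:
  assumes "(c a b, x) \<in> ctxcl S" and "c \<in> binary_ctors" and "\<forall>(l, r)\<in>S. \<not> guarded l"
  shows "(\<exists>a'. x = c a' b \<and> (a, a') \<in> ctxcl S) \<or> (\<exists>b'. x = c a b' \<and> (b, b') \<in> ctxcl S)"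
proof -
  have "c = Sign \<or> c = Blind \<or> c = Pair \<or> c = Enc"
    using assms(2) by (simp add: binary_ctors_def)
  then show ?thesis
    using assms(1,3) by - (elim disjE; hypsubst; erule ctxcl.cases; fastforce)
qed

lemma ctxcl_Pub_cases:
  assumes "(Pub a, x) \<in> ctxcl S" and "\<forall>(l, r)\<in>S. \<not> guarded l"
  shows "\<exists>a'. x = Pub a' \<and> (a, a') \<in> ctxcl S"
  using assms(2) by (cases rule: ctxcl.cases[OF assms(1)]) fastforce+

lemma rtrancl_ctxcl_binary_ctor_cases:
  assumes "(c a b, x) \<in> (ctxcl S)\<^sup>*" and "c \<in> binary_ctors" and "\<forall>(l, r)\<in>S. \<not> guarded l"
  shows "\<exists>a' b'. x = c a' b' \<and> (a, a') \<in> (ctxcl S)\<^sup>* \<and> (b, b') \<in> (ctxcl S)\<^sup>*"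
  using assms(1)
proof (induction rule: rtrancl_induct)
  case (step y z)
  then obtain a' b' where "y = c a' b'" "(a, a') \<in> (ctxcl S)\<^sup>*" "(b, b') \<in> (ctxcl S)\<^sup>*"
    by blast
  with ctxcl_binary_ctor_cases[OF _ assms(2,3)] step.hyps(2) show ?case
    by (blast intro: rtrancl_into_rtrancl)
qed blast

lemma rtrancl_ctxcl_Pub_cases:
  assumes "(Pub a, x) \<in> (ctxcl S)\<^sup>*" and "\<forall>(l, r)\<in>S. \<not> guarded l"
  shows "\<exists>a'. x = Pub a' \<and> (a, a') \<in> (ctxcl S)\<^sup>*"
  using assms(1)
proof (induction rule: rtrancl_induct)
  case (step y z)
  with ctxcl_Pub_cases[OF _ assms(2)] show ?case
    by (blast intro: rtrancl_into_rtrancl)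
qed blast

lemma ac_root_unguarded: "\<forall>(l, r)\<in>ac_root ACs \<union> (ac_root ACs)\<inverse>. \<not> guarded l"
  by (auto simp: ac_root_def)

lemma unguarded_subst: "\<not> guarded l \<Longrightarrow> \<not> guarded (subst \<sigma> l)"
  by (cases l) auto

lemma racstepI: "(a, a') \<in> acq ACs \<Longrightarrow> (a', a'') \<in> rstep R \<Longrightarrow> (a, a'') \<in> racstep ACs R"
  unfolding racstep_def acq_def by blast

context
  fixes ACs :: "'f set" and R :: "(('n, 'v, 'f) trm \<times> ('n, 'v, 'f) trm) set"
  assumes lhs_unguarded: "\<forall>(l, r)\<in>R. \<not> guarded l"
begin

lemma rstep_rules_unguarded:
  "\<forall>(l, r)\<in>{(subst \<sigma> l, subst \<sigma> r) | \<sigma> l r. (l, r) \<in> R}. \<not> guarded l"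
  using lhs_unguarded unguarded_subst by fast

lemma rstep_binary_ctor_cases:
  assumes "(c a b, x) \<in> rstep R" and "c \<in> binary_ctors"
  shows "(\<exists>a'. x = c a' b \<and> (a, a') \<in> rstep R) \<or> (\<exists>b'. x = c a b' \<and> (b, b') \<in> rstep R)"
  using ctxcl_binary_ctor_cases[OF assms(1)[unfolded rstep_def] assms(2) rstep_rules_unguarded]
  unfolding rstep_def .

lemma rstep_Pub_cases:
  assumes "(Pub a, x) \<in> rstep R"
  shows "\<exists>a'. x = Pub a' \<and> (a, a') \<in> rstep R"
  using ctxcl_Pub_cases[OF assms[unfolded rstep_def] rstep_rules_unguarded] unfolding rstep_def .

lemma irred_binary_ctor_iff:
  assumes "c \<in> binary_ctors"
  shows "irred ACs R (c a b) \<longleftrightarrow> irred ACs R a \<and> irred ACs R b"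
proof
  show "irred ACs R (c a b) \<Longrightarrow> irred ACs R a \<and> irred ACs R b"
    using irred_binary_ctor_args[OF assms] by blast
next
  assume args: "irred ACs R a \<and> irred ACs R b"
  show "irred ACs R (c a b)"
    unfolding irred_def
  proof
    assume "\<exists>u. (c a b, u) \<in> racstep ACs R"
    then obtain x y where "(c a b, x) \<in> acq ACs" and xy: "(x, y) \<in> rstep R"
      unfolding racstep_def by blast
    then obtain a' b' where x: "x = c a' b'" and "(a, a') \<in> acq ACs" "(b, b') \<in> acq ACs"
      using rtrancl_ctxcl_binary_ctor_cases[OF _ assms ac_root_unguarded]
      unfolding acq_eq_rtrancl_ctxcl by blast
    with rstep_binary_ctor_cases[OF xy[unfolded x] assms] args show False
      unfolding irred_def by (blast intro: racstepI)
  qed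
qed

lemma irred_Pub:
  assumes "irred ACs R a"
  shows "irred ACs R (Pub a)"
  unfolding irred_def
proof
  assume "\<exists>u. (Pub a, u) \<in> racstep ACs R"
  then obtain x y where "(Pub a, x) \<in> acq ACs" and xy: "(x, y) \<in> rstep R"
    unfolding racstep_def by blast
  then obtain a' where x: "x = Pub a'" and "(a, a') \<in> acq ACs"
    using rtrancl_ctxcl_Pub_cases[OF _ ac_root_unguarded] unfolding acq_eq_rtrancl_ctxcl by blast
  with rstep_Pub_cases[OF xy[unfolded x]] assms show False
    unfolding irred_def by (blast intro: racstepI)
qed

section \<open>Completeness\<close>

lemma sd_binary_ctor_intro:
  assumes "c \<in> binary_ctors" and "sd th ar ACs R \<Gamma> M" and "sd th ar ACs R \<Gamma> K"
  shows "sd th ar ACs R \<Gamma> (c M K)"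
proof -
  have nseq: "nseq ACs R \<Gamma> (c M K)"
    using sd_nseq[OF assms(2)] sd_nseq[OF assms(3)]
      irred_binary_ctor_iff[OF assms(1)] by (simp add: nseq_def)
  from assms(1) consider "c = Sign" | "c = Blind" | "c = Pair" | "c = Enc"
    by (auto simp: binary_ctors_def)
  then show ?thesis
    by cases (use nseq assms(2,3) in \<open>auto intro: sd.signR sd.blindR sd.pR sd.eR\<close>)
qed

lemma sd_unblind:
  assumes "sd th ar ACs R \<Gamma> (Sign (Blind M Rr) K)" and "sd th ar ACs R \<Gamma> Rr"
  shows "sd th ar ACs R \<Gamma> (Sign M K)"
proof (rule sd_cut'[OF assms(1)])
  have irred: "\<forall>t\<in>insert (Sign (Blind M Rr) K) \<Gamma> \<union> {Sign M K, Rr}. irred ACs R t"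
    using sd_nseq[OF assms(1)] irred_binary_ctor_iff[of Sign] irred_binary_ctor_iff[of Blind]
    by (auto simp: nseq_def)
  show "sd th ar ACs R (insert (Sign (Blind M Rr) K) \<Gamma>) (Sign M K)"
  proof (rule sd.blindL2[where M = M and K = K and Rr = Rr])
    show "sd th ar ACs R (insert (Sign (Blind M Rr) K) \<Gamma>) Rr"
      using irred by (auto intro: sd_weaken[OF assms(2)])
  qed (use irred in \<open>auto intro!: sd_hyp simp: nseq_def\<close>)
qed

context
  assumes convergent: "convergent_modAC ACs R"
begin

lemma sd_nf_eqE_iff:
  assumes "(t, B) \<in> eqE ACs R" and "irred ACs R B"
  shows "sd th ar ACs R \<Gamma> (nf ACs R t) \<longleftrightarrow> sd th ar ACs R \<Gamma> B"
proof -
  have "(nf ACs R t, B) \<in> eqE ACs R"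
    using eqE_sym[OF nf_eqE[OF convergent]] assms(1) by (rule eqE_trans)
  then show ?thesis
    using assms(2) irred_nf[OF convergent] by (blast intro: sd_eqE eqE_sym)
qed

lemma sd_nf_binary_ctor_iff:
  assumes "c \<in> binary_ctors"
  shows "sd th ar ACs R \<Gamma> (nf ACs R (c M K)) \<longleftrightarrow>
    sd th ar ACs R \<Gamma> (c (nf ACs R M) (nf ACs R K))"
proof (rule sd_nf_eqE_iff)
  show "(c M K, c (nf ACs R M) (nf ACs R K)) \<in> eqE ACs R"
    using assms nf_eqE[OF convergent] nf_eqE[OF convergent] by (rule eqE_binary_ctor)
  show "irred ACs R (c (nf ACs R M) (nf ACs R K))"
    by (simp add: irred_binary_ctor_iff[OF assms] irred_nf[OF convergent])
qed

lemma sd_nf_Pub_iff: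
  "sd th ar ACs R \<Gamma> (nf ACs R (Pub K)) \<longleftrightarrow> sd th ar ACs R \<Gamma> (Pub (nf ACs R K))"
  by (rule sd_nf_eqE_iff[OF eqE_Pub[OF nf_eqE[OF convergent]]])
    (rule irred_Pub[OF irred_nf[OF convergent]])

lemmas sd_nf_ctor_iff = sd_nf_binary_ctor_iff[OF binary_ctorsI(1)]
  sd_nf_binary_ctor_iff[OF binary_ctorsI(2)] sd_nf_binary_ctor_iff[OF binary_ctorsI(3)]
  sd_nf_binary_ctor_iff[OF binary_ctorsI(4)] sd_nf_Pub_iff

theorem sd_complete: "nd ar ACs R \<Gamma> M \<Longrightarrow> sd th ar ACs R (nf ACs R ` \<Gamma>) (nf ACs R M)"
proof (induction rule: nd.induct)
  case (id M)
  then show ?case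
    by (intro sd_hyp) (auto simp: nseq_def irred_nf[OF convergent])
next
  case (eE M K)
  show ?case
    using eE.IH unfolding sd_nf_ctor_iff by (rule sd_Enc_elim)
next
  case (pE1 M N)
  show ?case
    using pE1.IH unfolding sd_nf_ctor_iff by (rule sd_Pair_elim(1))
next
  case (pE2 M N)
  show ?case
    using pE2.IH unfolding sd_nf_ctor_iff by (rule sd_Pair_elim(2))
next
  case (signE M K)
  show ?case
    using signE.IH unfolding sd_nf_ctor_iff by (rule sd_Sign_elim)
next
  case (blindE1 M K)
  show ?case
    using blindE1.IH unfolding sd_nf_ctor_iff by (rule sd_Blind_elim)
next
  case (blindE2 M Rr K)
  have "(Sign (Blind M Rr) K, Sign (Blind (nf ACs R M) (nf ACs R Rr)) (nf ACs R K)) \<in> eqE ACs R"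
    using nf_eqE[OF convergent] by (simp add: eqE_binary_ctor)
  moreover have "irred ACs R (Sign (Blind (nf ACs R M) (nf ACs R Rr)) (nf ACs R K))"
    by (simp add: irred_binary_ctor_iff irred_nf[OF convergent])
  ultimately have
    "sd th ar ACs R (nf ACs R ` \<Gamma>) (Sign (Blind (nf ACs R M) (nf ACs R Rr)) (nf ACs R K))"
    using blindE2.IH(1) sd_nf_eqE_iff by blast
  from this blindE2.IH(2) show ?case
    unfolding sd_nf_ctor_iff by (rule sd_unblind)
next
  case (eI M K)
  show ?case
    using eI.IH unfolding sd_nf_ctor_iff by (rule sd_binary_ctor_intro[OF binary_ctorsI(4)])
next
  case (pI M N)
  show ?case
    using pI.IH unfolding sd_nf_ctor_iff by (rule sd_binary_ctor_intro[OF binary_ctorsI(3)])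
next
  case (signI M K)
  show ?case
    using signI.IH unfolding sd_nf_ctor_iff by (rule sd_binary_ctor_intro[OF binary_ctorsI(1)])
next
  case (blindI M K)
  show ?case
    using blindI.IH unfolding sd_nf_ctor_iff by (rule sd_binary_ctor_intro[OF binary_ctorsI(2)])
next
  case (eq N M)
  have "(M, nf ACs R N) \<in> eqE ACs R"
    using eq.hyps(2) nf_eqE[OF convergent] by (rule eqE_trans)
  with eq.IH show ?case
    using sd_nf_eqE_iff irred_nf[OF convergent] by blast
next
  case (gI Ms g)
  have "(nf ACs R (Fn g Ms), Fn g (map (nf ACs R) Ms)) \<in> eqE ACs R"
    using eqE_sym[OF nf_eqE[OF convergent]] eqE_Fn_map[OF nf_eqE[OF convergent]]
    by (rule eqE_trans)
  with gI show ?case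
    by (intro sd_Fn_intro[where g = g and ts = "map (nf ACs R) Ms"])
      (auto simp: irred_nf[OF convergent])
qed

end

end

lemma E_setting_lhs_unguarded:
  assumes "E_setting th ar ACs R"
  shows "\<forall>(l, r)\<in>R. \<not> guarded l"
proof -
  have "\<not> guarded l" if "pure th i l" and "\<forall>x. l \<noteq> Var x" for i l
    using that by (cases l) auto
  with assms show ?thesis
    unfolding E_setting_def by fast
qed

theorem proposition6:
  fixes th :: "'f \<Rightarrow> 'i" and ar :: "'f \<Rightarrow> nat" and ACs :: "'f set"
    and R :: "(('n, 'v, 'f) trm \<times> ('n, 'v, 'f) trm) set"
    and \<Gamma> :: "('n, 'v, 'f) trm set" and M :: "('n, 'v, 'f) trm"
  assumes "E_setting th ar ACs R"
    and "finite \<Gamma>" and "\<forall>t\<in>\<Gamma>. ground t \<and> wft ar t"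
    and "ground M" and "wft ar M"
  shows "nd ar ACs R \<Gamma> M \<longleftrightarrow> sd th ar ACs R (nf ACs R ` \<Gamma>) (nf ACs R M)"
proof
  have convergent: "convergent_modAC ACs R"
    using assms(1) by (simp add: E_setting_def)
  show "sd th ar ACs R (nf ACs R ` \<Gamma>) (nf ACs R M)" if "nd ar ACs R \<Gamma> M"
    using E_setting_lhs_unguarded[OF assms(1)] convergent that by (rule sd_complete)
  show "nd ar ACs R \<Gamma> M" if "sd th ar ACs R (nf ACs R ` \<Gamma>) (nf ACs R M)"
  proof -
    have "\<forall>t\<in>nf ACs R ` \<Gamma>. nd ar ACs R \<Gamma> t"
      using nd.id nd.eq eqE_sym[OF nf_eqE[OF convergent]] by blast
    with that have "nd ar ACs R \<Gamma> (nf ACs R M)"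
      by (rule sd_sound)
    then show ?thesis
      using nf_eqE[OF convergent] by (rule nd.eq)
  qed
qed

end
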